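(* Let $q$ be a prime power, $\mathbb{L}=\mathrm{GF}(q^m)$, $n\mid q^m-1$, and $F_n=\{f\in\mathbb{L}^n : f_{qi\bmod n}=f_i^q\ \forall i\in\mathbb{Z}/n\mathbb{Z}\}$. For $g\in\mathbb{L}^n$ and each $q$-cyclotomic class $C=\{c,qc,\ldots,q^{|C|-1}c\}$ modulo $n$ (with chosen leader $c$), put $x_{C,t}=(g_{q^tc})^{q^{m-t}}$ for $t=0,\ldots,|C|-1$. Then $$\min_{f\in F_n}|\mathrm{supp}(g-f)|=\sum_{C}\Big(|C|-\max_{b\in\mathrm{GF}(q^{|C|})}\#\{t : x_{C,t}=b\}\Big),$$ the sum running over all $q$-cyclotomic classes modulo $n$.
   Context: $\mathrm{supp}(h)=\{i : h_i\neq0\}$. The $q$-cyclotomic class of $s\in\mathbb{Z}/n\mathbb{Z}$ is $\{s,qs,q^2s,\ldots\}\bmod n$. $\mathrm{GF}(q^\ell)$ for $\ell\mid m$ is the unique subfield of $\mathbb{L}$ of that size. *)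

theory Defs
  imports "HOL-Number_Theory.Number_Theory"
begin

text \<open>Vectors in L^n are functions nat \<Rightarrow> 'a, indexed by {0..<n} (representing Z/nZ),
  and set to 0 outside this range.\<close>

definition Fn :: "nat \<Rightarrow> nat \<Rightarrow> (nat \<Rightarrow> 'a::field) set" where
  "Fn q n = {f. (\<forall>i<n. f ((q * i) mod n) = f i ^ q) \<and> (\<forall>i\<ge>n. f i = 0)}"

definition supp_card :: "nat \<Rightarrow> (nat \<Rightarrow> 'a::zero) \<Rightarrow> nat" where
  "supp_card n h = card {i. i < n \<and> h i \<noteq> 0}"

definition cyc_class :: "nat \<Rightarrow> nat \<Rightarrow> nat \<Rightarrow> nat set" where
  "cyc_class q n s = {(q ^ j * s) mod n | j. True}"

definition cyc_classes :: "nat \<Rightarrow> nat \<Rightarrow> nat set set" where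
  "cyc_classes q n = {cyc_class q n c | c. c < n}"

definition subfield_GF :: "nat \<Rightarrow> nat \<Rightarrow> 'a::field set" where
  "subfield_GF q l = {b. b ^ (q ^ l) = b}"

definition xCt :: "nat \<Rightarrow> nat \<Rightarrow> nat \<Rightarrow> (nat \<Rightarrow> 'a::field) \<Rightarrow> nat \<Rightarrow> nat \<Rightarrow> 'a" where
  "xCt q m n g c t = (g ((q ^ t * c) mod n)) ^ (q ^ (m - t))"

end

theory Submission
  imports Defs
begin

text \<open>
  A word f in F_n satisfies f(q^t c) = f(c)^(q^t), so on a cyclotomic class C with leader c it
  is determined by f(c), which lies in GF(q^|C|); conversely, any choice of such values at the
  leaders extends to a word of F_n. Since x \<mapsto> x^(q^(m-t)) inverts x \<mapsto> x^(q^t) on L, the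
  words g and f agree at q^t c iff x_{C,t} = f(c). The distance from g to f therefore splits
  into independent terms |C| - #{t. x_{C,t} = f(c)}, one per class, and is minimised termwise.
\<close>

lemma finite_field_power_card:
  fixes x :: "'a::{finite,field}"
  shows "x ^ card (UNIV :: 'a set) = x"
proof (cases "x = 0")
  case False
  have "x * (\<Prod>y\<in>UNIV-{0}. x * y) = x * x ^ (card (UNIV :: 'a set) - 1) * \<Prod>(UNIV-{0})"
    by (simp add: prod.distrib mult_ac)
  also have "x * x ^ (card (UNIV :: 'a set) - 1) = x ^ card (UNIV :: 'a set)"
    using finite_UNIV_card_ge_0[where ?'a = 'a] by (simp flip: power_Suc)
  also have "(\<Prod>y\<in>UNIV-{0}. x * y) = (\<Prod>y\<in>UNIV-{0}. y)"
    by (rule prod.reindex_bij_witness[of _ "\<lambda>y. y / x" "\<lambda>y. x * y"]) (use False in auto)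
  finally show ?thesis
    by simp
qed (use finite_UNIV_card_ge_0[where ?'a = 'a] in auto)

lemma Frobenius_power_eq_iff:
  fixes x a :: "'a::monoid_mult"
  assumes frob: "\<And>y::'a. y ^ (q ^ m) = y" and "t \<le> m"
  shows "x ^ (q ^ (m - t)) = a \<longleftrightarrow> x = a ^ (q ^ t)"
proof -
  have "q ^ t * q ^ (m - t) = q ^ m"
    using \<open>t \<le> m\<close> by (simp flip: power_add)
  then have "(y ^ (q ^ t)) ^ (q ^ (m - t)) = y" "(y ^ (q ^ (m - t))) ^ (q ^ t) = y" for y :: 'a
    using frob by (simp_all flip: power_mult add: mult.commute)
  then show ?thesis
    by metis
qed

lemma subfield_GF_power_mod:
  assumes "b \<in> subfield_GF q l"
  shows "b ^ (q ^ k) = b ^ (q ^ (k mod l))"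
proof -
  have b_mult: "b ^ (q ^ (l * j)) = b" for j
  proof (induction j)
    case (Suc j)
    have "b ^ (q ^ (l * Suc j)) = (b ^ (q ^ (l * j))) ^ (q ^ l)"
      by (simp flip: power_mult add: power_add mult.commute)
    then show ?case
      using Suc assms by (simp add: subfield_GF_def)
  qed simp
  have "b ^ (q ^ k) = (b ^ (q ^ (l * (k div l)))) ^ (q ^ (k mod l))"
    by (simp flip: power_mult power_add)
  then show ?thesis
    using b_mult by simp
qed

lemma zero_in_subfield_GF: "q > 0 \<Longrightarrow> 0 \<in> subfield_GF q l"
  by (simp add: subfield_GF_def)

lemma Min_diff_eq_diff_Max:
  fixes h :: "'b \<Rightarrow> nat"
  assumes "finite S" and "S \<noteq> {}"
  shows "Min ((\<lambda>x. k - h x) ` S) = k - Max (h ` S)"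
proof (rule Min_eqI)
  have "Max (h ` S) \<in> h ` S"
    using assms by (intro Max_in) auto
  then obtain x where "x \<in> S" and "h x = Max (h ` S)"
    by auto
  then show "k - Max (h ` S) \<in> (\<lambda>x. k - h x) ` S"
    by (metis image_eqI)
qed (use assms in \<open>auto intro!: diff_le_mono2\<close>)

lemma Min_sum_independent:
  fixes \<phi> :: "'i \<Rightarrow> 'b \<Rightarrow> nat" and v :: "'f \<Rightarrow> 'i \<Rightarrow> 'b"
  assumes "finite I" and fin: "\<And>i. i \<in> I \<Longrightarrow> finite (S i)" and ne: "\<And>i. i \<in> I \<Longrightarrow> S i \<noteq> {}"
    and v_in: "\<And>f i. f \<in> F \<Longrightarrow> i \<in> I \<Longrightarrow> v f i \<in> S i"
    and v_onto: "\<And>b. b \<in> Pi I S \<Longrightarrow> \<exists>f\<in>F. \<forall>i\<in>I. v f i = b i"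
  shows "Min ((\<lambda>f. \<Sum>i\<in>I. \<phi> i (v f i)) ` F) = (\<Sum>i\<in>I. Min (\<phi> i ` S i))"
proof (rule Min_eqI)
  have "(\<lambda>f. \<Sum>i\<in>I. \<phi> i (v f i)) ` F \<subseteq> (\<lambda>b. \<Sum>i\<in>I. \<phi> i (b i)) ` PiE I S"
  proof
    fix y assume "y \<in> (\<lambda>f. \<Sum>i\<in>I. \<phi> i (v f i)) ` F"
    then obtain f where "f \<in> F" and y: "y = (\<Sum>i\<in>I. \<phi> i (v f i))"
      by blast
    then have "restrict (v f) I \<in> PiE I S"
      using v_in by auto
    moreover have "y = (\<Sum>i\<in>I. \<phi> i (restrict (v f) I i))"
      using y by simp
    ultimately show "y \<in> (\<lambda>b. \<Sum>i\<in>I. \<phi> i (b i)) ` PiE I S"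
      by blast
  qed
  then show "finite ((\<lambda>f. \<Sum>i\<in>I. \<phi> i (v f i)) ` F)"
    by (rule finite_subset) (use \<open>finite I\<close> fin in \<open>simp add: finite_PiE\<close>)
next
  fix y assume "y \<in> (\<lambda>f. \<Sum>i\<in>I. \<phi> i (v f i)) ` F"
  then obtain f where "f \<in> F" and "y = (\<Sum>i\<in>I. \<phi> i (v f i))"
    by blast
  then show "(\<Sum>i\<in>I. Min (\<phi> i ` S i)) \<le> y"
    using fin v_in by (auto intro!: sum_mono Min_le)
next
  have "Min (\<phi> i ` S i) \<in> \<phi> i ` S i" if "i \<in> I" for i
    using fin[OF that] ne[OF that] by (intro Min_in) auto
  then have "\<exists>x\<in>S i. \<phi> i x = Min (\<phi> i ` S i)" if "i \<in> I" for i
    using that by (metis image_iff)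
  then obtain b where b: "\<forall>i\<in>I. b i \<in> S i \<and> \<phi> i (b i) = Min (\<phi> i ` S i)"
    by metis
  then obtain f where "f \<in> F" and "\<forall>i\<in>I. v f i = b i"
    using v_onto by blast
  then have "(\<Sum>i\<in>I. Min (\<phi> i ` S i)) = (\<Sum>i\<in>I. \<phi> i (v f i))"
    using b by simp
  then show "(\<Sum>i\<in>I. Min (\<phi> i ` S i)) \<in> (\<lambda>f. \<Sum>i\<in>I. \<phi> i (v f i)) ` F"
    using \<open>f \<in> F\<close> by blast
qed

locale cyclotomic_cosets =
  fixes q n m :: nat
  assumes n_pos: "n > 0" and m_pos: "m > 0"
    and coprime: "coprime q n" and order: "[q ^ m = 1] (mod n)"
begin

definition orbit :: "nat \<Rightarrow> nat \<Rightarrow> nat" where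
  "orbit c t = (q ^ t * c) mod n"

definition period :: "nat \<Rightarrow> nat" where
  "period c = (LEAST k. 0 < k \<and> orbit c k = orbit c 0)"

lemma orbit_less: "orbit c t < n"
  using n_pos by (simp add: orbit_def)

lemma orbit_0: "c < n \<Longrightarrow> orbit c 0 = c"
  by (simp add: orbit_def)

lemma orbit_shift: "(q ^ a * orbit c t) mod n = orbit c (a + t)"
  by (simp add: orbit_def mod_mult_right_eq mult.assoc power_add)

lemma orbit_Suc: "orbit c (Suc t) = (q * orbit c t) mod n"
  using orbit_shift[of 1 c t] by simp

lemma orbit_m: "orbit c m = orbit c 0"
proof -
  have "[q ^ m * c = 1 * c] (mod n)"
    using order by (rule cong_mult) simp
  then show ?thesis
    by (simp add: orbit_def cong_def)
qed

lemma
  shows period_pos: "0 < period c"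
    and orbit_period: "orbit c (period c) = orbit c 0"
    and period_le: "period c \<le> m"
proof -
  have m: "0 < m \<and> orbit c m = orbit c 0"
    using m_pos orbit_m by simp
  then show "0 < period c" "orbit c (period c) = orbit c 0"
    unfolding period_def by (metis (mono_tags, lifting) LeastI)+
  show "period c \<le> m"
    unfolding period_def using m by (rule Least_le)
qed

lemma period_minimal: "0 < d \<Longrightarrow> d < period c \<Longrightarrow> orbit c d \<noteq> orbit c 0"
  unfolding period_def using not_less_Least by blast

lemma orbit_period_mult: "orbit c (t + j * period c) = orbit c t"
proof (induction j)
  case (Suc j)
  have "orbit c (t + Suc j * period c) = (q ^ (t + j * period c) * orbit c (period c)) mod n"
    using orbit_shift[of "t + j * period c" c "period c"] by (simp add: algebra_simps)
  also have "\<dots> = orbit c (t + j * period c)"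
    using orbit_shift[of "t + j * period c" c 0] by (simp add: orbit_period)
  finally show ?case
    using Suc by simp
qed simp

lemma orbit_mod_period: "orbit c (t mod period c) = orbit c t"
  using orbit_period_mult[of c "t mod period c" "t div period c"] by simp

lemma orbit_diff: assumes "a \<le> b" "orbit c a = orbit c b" shows "orbit c (b - a) = orbit c 0"
proof -
  have "q ^ b = q ^ a * q ^ (b - a)"
    using assms(1) by (simp flip: power_add)
  then have "[q ^ a * c = q ^ a * (q ^ (b - a) * c)] (mod n)"
    using assms(2) by (simp add: orbit_def cong_def mult.assoc)
  moreover have "coprime (q ^ a) n"
    using coprime by simp
  ultimately have "[c = q ^ (b - a) * c] (mod n)"
    using cong_mult_lcancel_nat by blast
  then show ?thesis
    by (simp add: orbit_def cong_def)
qed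

lemma orbit_eq_iff: "orbit c a = orbit c b \<longleftrightarrow> a mod period c = b mod period c"
proof
  have mod_eq: "a mod period c = b mod period c" if "a \<le> b" "orbit c a = orbit c b" for a b
  proof -
    define d where "d = (b - a) mod period c"
    have "orbit c d = orbit c 0"
      using orbit_diff[OF that] orbit_mod_period[of c "b - a"] by (simp add: d_def)
    moreover have "d < period c"
      using period_pos by (simp add: d_def)
    ultimately have "d = 0"
      using period_minimal[of d c] by auto
    then show ?thesis
      using mod_eq_dvd_iff_nat[OF \<open>a \<le> b\<close>, of "period c"] by (simp add: d_def mod_eq_0_iff_dvd)
  qed
  assume "orbit c a = orbit c b"
  then show "a mod period c = b mod period c"
    using mod_eq[of a b] mod_eq[of b a] nat_le_linear[of a b] by argo
next
  assume "a mod period c = b mod period c"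
  then show "orbit c a = orbit c b"
    using orbit_mod_period[of c a] orbit_mod_period[of c b] by simp
qed

lemma mem_cyc_class_iff: "i \<in> cyc_class q n c \<longleftrightarrow> (\<exists>t. i = orbit c t)"
  by (auto simp: cyc_class_def orbit_def)

lemma cyc_class_eq_orbit_image: "cyc_class q n c = orbit c ` {..<period c}"
proof
  show "cyc_class q n c \<subseteq> orbit c ` {..<period c}"
  proof
    fix i assume "i \<in> cyc_class q n c"
    then obtain t where "i = orbit c t"
      by (auto simp: mem_cyc_class_iff)
    then have "i = orbit c (t mod period c)"
      by (simp add: orbit_mod_period)
    moreover have "t mod period c < period c"
      using period_pos[of c] by simp
    ultimately show "i \<in> orbit c ` {..<period c}"
      by blast
  qed
qed (auto simp: mem_cyc_class_iff)

lemma inj_on_orbit: "inj_on (orbit c) {..<period c}"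
  by (auto simp: inj_on_def orbit_eq_iff)

lemma card_cyc_class: "card (cyc_class q n c) = period c"
  using inj_on_orbit by (simp add: cyc_class_eq_orbit_image card_image)

lemma cyc_class_of_mem:
  assumes "i \<in> cyc_class q n c"
  shows "cyc_class q n i = cyc_class q n c"
proof -
  obtain j where i: "i = orbit c j"
    using assms mem_cyc_class_iff by blast
  have "orbit i a = (q ^ a * orbit c j) mod n" for a
    by (simp add: orbit_def i)
  then have shift: "orbit i a = orbit c (a + j)" for a
    by (simp add: orbit_shift)
  have unshift: "orbit c t = orbit i (t + j * period c - j)" for t
  proof -
    have "j \<le> j * period c"
      using period_pos[of c] by simp
    then have "t + j * period c - j + j = t + j * period c"
      by linarith
    then show ?thesis
      using orbit_period_mult[of c t j] by (simp add: shift)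
  qed
  show ?thesis
  proof
    show "cyc_class q n i \<subseteq> cyc_class q n c"
      by (auto simp: mem_cyc_class_iff shift)
    show "cyc_class q n c \<subseteq> cyc_class q n i"
      by (auto simp: mem_cyc_class_iff unshift)
  qed
qed

lemma cyc_class_less: "i \<in> cyc_class q n c \<Longrightarrow> i < n"
  by (auto simp: mem_cyc_class_iff orbit_less)

lemma self_in_cyc_class: "c < n \<Longrightarrow> c \<in> cyc_class q n c"
  unfolding mem_cyc_class_iff using orbit_0[symmetric] by blast

lemma cyc_class_of_mem_cyc_classes:
  assumes "C \<in> cyc_classes q n" and "c \<in> C"
  shows "cyc_class q n c = C" and "c < n"
proof -
  obtain c0 where "C = cyc_class q n c0"
    using assms(1) by (auto simp: cyc_classes_def)
  then show "cyc_class q n c = C" and "c < n"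
    using assms(2) cyc_class_of_mem cyc_class_less by simp_all
qed

lemma finite_cyc_classes: "finite (cyc_classes q n)"
proof -
  have "cyc_classes q n = cyc_class q n ` {..<n}"
    by (auto simp: cyc_classes_def)
  then show ?thesis
    by simp
qed

lemma supp_card_eq_sum_cyc_classes:
  "supp_card n h = (\<Sum>C\<in>cyc_classes q n. card {i \<in> C. h i \<noteq> 0})"
proof -
  have partition: "{i. i < n \<and> h i \<noteq> 0} = (\<Union>C\<in>cyc_classes q n. {i \<in> C. h i \<noteq> 0})"
    using self_in_cyc_class cyc_class_less by (auto simp: cyc_classes_def)
  have "\<forall>C\<in>cyc_classes q n. finite {i \<in> C. h i \<noteq> 0}"
    by (auto simp: cyc_classes_def cyc_class_eq_orbit_image)
  moreover have "\<forall>A\<in>cyc_classes q n. \<forall>B\<in>cyc_classes q n. A \<noteq> B \<longrightarrow>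
      {i \<in> A. h i \<noteq> 0} \<inter> {i \<in> B. h i \<noteq> 0} = {}"
    using cyc_class_of_mem_cyc_classes(1) by blast
  ultimately show ?thesis
    unfolding supp_card_def partition by (rule card_UN_disjoint[OF finite_cyc_classes])
qed

lemma Fn_orbit:
  assumes "f \<in> Fn q n" and "c < n"
  shows "f (orbit c t) = f c ^ (q ^ t)"
proof (induction t)
  case (Suc t)
  have "f (orbit c (Suc t)) = f (orbit c t) ^ q"
    using assms(1) orbit_less[of c t] by (simp add: orbit_Suc Fn_def)
  also have "\<dots> = f c ^ (q ^ Suc t)"
    unfolding Suc power_Suc2 by (rule power_mult[symmetric])
  finally show ?case .
qed (simp add: orbit_0 assms(2))

lemma Fn_in_subfield_GF:
  assumes "f \<in> Fn q n" and "C \<in> cyc_classes q n" and "c \<in> C"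
  shows "f c \<in> subfield_GF q (card C)"
proof -
  note c_class = cyc_class_of_mem_cyc_classes[OF assms(2,3)]
  show ?thesis
    using Fn_orbit[OF assms(1) c_class(2), of "period c"] Fn_orbit[OF assms(1) c_class(2), of 0]
      orbit_period[of c] card_cyc_class[of c] c_class(1)
    by (simp add: subfield_GF_def)
qed

lemma card_mismatch_cyc_class:
  fixes g f :: "nat \<Rightarrow> 'a::field"
  assumes frob: "\<And>x::'a. x ^ (q ^ m) = x" and f: "\<And>t. f (orbit c t) = a ^ (q ^ t)"
  shows "card {i \<in> cyc_class q n c. g i \<noteq> f i}
    = period c - card {t. t < period c \<and> xCt q m n g c t = a}"
proof -
  have agree: "g (orbit c t) = f (orbit c t) \<longleftrightarrow> xCt q m n g c t = a" if "t < period c" for t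
  proof -
    have "t \<le> m"
      using that period_le[of c] by simp
    moreover have "xCt q m n g c t = g (orbit c t) ^ (q ^ (m - t))"
      by (simp add: xCt_def orbit_def)
    ultimately show ?thesis
      using Frobenius_power_eq_iff[OF frob, of t "g (orbit c t)" a] f[of t] by simp
  qed
  let ?agreeing = "{t. t < period c \<and> xCt q m n g c t = a}"
  have "{t \<in> {..<period c}. g (orbit c t) \<noteq> f (orbit c t)} = {..<period c} - ?agreeing"
    using agree by blast
  then have "{i \<in> cyc_class q n c. g i \<noteq> f i} = orbit c ` ({..<period c} - ?agreeing)"
    unfolding cyc_class_eq_orbit_image by blast
  moreover have "inj_on (orbit c) ({..<period c} - ?agreeing)"
    using inj_on_orbit by (rule inj_on_subset) auto
  moreover have sub: "?agreeing \<subseteq> {..<period c}"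
    by auto
  ultimately show ?thesis
    using card_Diff_subset[OF finite_subset[OF sub finite_lessThan] sub] by (simp add: card_image)
qed

lemma supp_card_diff_Fn:
  fixes g f :: "nat \<Rightarrow> 'a::field"
  assumes frob: "\<And>x::'a. x ^ (q ^ m) = x" and lead: "\<And>C. C \<in> cyc_classes q n \<Longrightarrow> lead C \<in> C"
    and f: "f \<in> Fn q n"
  shows "supp_card n (\<lambda>i. g i - f i)
    = (\<Sum>C\<in>cyc_classes q n. card C - card {t. t < card C \<and> xCt q m n g (lead C) t = f (lead C)})"
  unfolding supp_card_eq_sum_cyc_classes
proof (rule sum.cong[OF refl])
  fix C assume C: "C \<in> cyc_classes q n"
  note leader = cyc_class_of_mem_cyc_classes[OF C lead[OF C]]
  have "card {i \<in> C. g i - f i \<noteq> 0} = card {i \<in> cyc_class q n (lead C). g i \<noteq> f i}"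
    using leader by simp
  also have "\<dots> = period (lead C) - card {t. t < period (lead C) \<and> xCt q m n g (lead C) t = f (lead C)}"
    using card_mismatch_cyc_class[OF frob Fn_orbit[OF f leader(2)]] .
  finally show "card {i \<in> C. g i - f i \<noteq> 0}
    = card C - card {t. t < card C \<and> xCt q m n g (lead C) t = f (lead C)}"
    using card_cyc_class[of "lead C"] leader by simp
qed

text \<open>Any exponent t with orbit (lead C) t = i will do here, as b C lies in GF(q^|C|).\<close>

definition extend_from_leaders :: "(nat set \<Rightarrow> nat) \<Rightarrow> (nat set \<Rightarrow> 'a::field) \<Rightarrow> nat \<Rightarrow> 'a" where
  "extend_from_leaders lead b i = (if i < n then
      b (cyc_class q n i) ^ (q ^ (SOME t. orbit (lead (cyc_class q n i)) t = i)) else 0)"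

context
  fixes lead :: "nat set \<Rightarrow> nat" and b :: "nat set \<Rightarrow> 'a::field"
  assumes lead: "\<And>C. C \<in> cyc_classes q n \<Longrightarrow> lead C \<in> C"
    and b: "\<And>C. C \<in> cyc_classes q n \<Longrightarrow> b C \<in> subfield_GF q (card C)"
begin

lemma extend_from_leaders_orbit:
  assumes C: "C \<in> cyc_classes q n"
  shows "extend_from_leaders lead b (orbit (lead C) t) = b C ^ (q ^ t)"
proof -
  note leader = cyc_class_of_mem_cyc_classes[OF C lead[OF C]]
  define i where "i = orbit (lead C) t"
  have "i \<in> cyc_class q n (lead C)"
    unfolding mem_cyc_class_iff i_def by blast
  from cyc_class_of_mem[OF this] have "cyc_class q n i = C"
    using leader(1) by simp
  obtain j where j: "j = (SOME j. orbit (lead C) j = i)" and "orbit (lead C) j = i"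
    using someI[of "\<lambda>j. orbit (lead C) j = i" t] i_def by blast
  then have jt: "j mod period (lead C) = t mod period (lead C)"
    using orbit_eq_iff by (simp add: i_def)
  have bC: "b C \<in> subfield_GF q (period (lead C))"
    using b[OF C] card_cyc_class[of "lead C"] leader(1) by simp
  have "i < n"
    by (simp add: i_def orbit_less)
  then have "extend_from_leaders lead b i = b C ^ (q ^ j)"
    using \<open>cyc_class q n i = C\<close> j by (simp add: extend_from_leaders_def)
  also have "\<dots> = b C ^ (q ^ t)"
    using subfield_GF_power_mod[OF bC, of j] subfield_GF_power_mod[OF bC, of t] jt by simp
  finally show ?thesis
    by (simp add: i_def)
qed

lemma extend_from_leaders_lead:
  assumes "C \<in> cyc_classes q n"
  shows "extend_from_leaders lead b (lead C) = b C"
  using extend_from_leaders_orbit[OF assms, of 0] orbit_0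
    cyc_class_of_mem_cyc_classes(2)[OF assms lead[OF assms]]
  by simp

lemma extend_from_leaders_in_Fn: "extend_from_leaders lead b \<in> Fn q n"
  unfolding Fn_def
proof (intro CollectI conjI allI impI)
  fix i assume "i < n"
  define C where "C = cyc_class q n i"
  have C: "C \<in> cyc_classes q n"
    using \<open>i < n\<close> by (auto simp: C_def cyc_classes_def)
  then have "i \<in> cyc_class q n (lead C)"
    using cyc_class_of_mem_cyc_classes(1)[OF C lead[OF C]] self_in_cyc_class[OF \<open>i < n\<close>]
    by (simp add: C_def)
  then obtain t where t: "i = orbit (lead C) t"
    using mem_cyc_class_iff by blast
  then have "extend_from_leaders lead b ((q * i) mod n) = b C ^ (q ^ Suc t)"
    by (simp only: orbit_Suc[symmetric] extend_from_leaders_orbit[OF C])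
  also have "\<dots> = (b C ^ (q ^ t)) ^ q"
    unfolding power_Suc2 by (rule power_mult)
  also have "\<dots> = extend_from_leaders lead b i ^ q"
    using extend_from_leaders_orbit[OF C] t by simp
  finally show "extend_from_leaders lead b ((q * i) mod n) = extend_from_leaders lead b i ^ q" .
qed (simp add: extend_from_leaders_def)

end

end

lemma cyclotomic_cosets_if_dvd:
  assumes "q > 1" and "m > 0" and "n dvd q ^ m - 1"
  shows "cyclotomic_cosets q n m"
proof
  have "q ^ m > 1"
    using assms(1,2) by (rule one_less_power)
  then show "n > 0"
    using assms(3) by (auto intro: Nat.gr0I)
  show order: "[q ^ m = 1] (mod n)"
    using assms(3) \<open>q ^ m > 1\<close> by (simp add: cong_altdef_nat)
  have "coprime (q ^ m) n"
    using cong_imp_coprime[OF cong_sym[OF order]] by simp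
  then show "coprime q n"
    using assms(2) by simp
qed (use assms in simp)

theorem theorem9p4:
  fixes q m n :: nat and g :: "nat \<Rightarrow> 'a::{finite,field}" and lead :: "nat set \<Rightarrow> nat"
  assumes "primepow q" and "m > 0" and "card (UNIV :: 'a set) = q ^ m" and "n dvd q ^ m - 1"
    and "\<forall>i\<ge>n. g i = 0"
    and "\<forall>C\<in>cyc_classes q n. lead C \<in> C"
  shows "Min ((\<lambda>f. supp_card n (\<lambda>i. g i - f i)) ` Fn q n) =
    (\<Sum>C\<in>cyc_classes q n. card C -
       Max ((\<lambda>b. card {t. t < card C \<and> xCt q m n g (lead C) t = b}) ` subfield_GF q (card C)))"
proof -
  have "q > 1"
    using primepow_gt_Suc_0[OF assms(1)] by simp
  interpret cyclotomic_cosets q n m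
    using cyclotomic_cosets_if_dvd[OF \<open>q > 1\<close> assms(2,4)] .
  have frob: "x ^ (q ^ m) = x" for x :: 'a
    using finite_field_power_card[of x] assms(3) by simp
  have GF_nonempty: "subfield_GF q l \<noteq> {}" for l
    using zero_in_subfield_GF[of q l] \<open>q > 1\<close> by auto
  let ?agree = "\<lambda>C b. card {t. t < card C \<and> xCt q m n g (lead C) t = b}"
  have "Min ((\<lambda>f. supp_card n (\<lambda>i. g i - f i)) ` Fn q n)
      = Min ((\<lambda>f. \<Sum>C\<in>cyc_classes q n. card C - ?agree C (f (lead C))) ` Fn q n)"
    using supp_card_diff_Fn[OF frob] assms(6) by (intro arg_cong[where f = Min] image_cong) auto
  also have "\<dots> = (\<Sum>C\<in>cyc_classes q n. Min ((\<lambda>b. card C - ?agree C b) ` subfield_GF q (card C)))"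
  proof (rule Min_sum_independent)
    show "f (lead C) \<in> subfield_GF q (card C)" if "f \<in> Fn q n" "C \<in> cyc_classes q n" for f C
      using Fn_in_subfield_GF[OF that] assms(6) that(2) by blast
    show "\<exists>f\<in>Fn q n. \<forall>C\<in>cyc_classes q n. f (lead C) = b C"
      if "b \<in> Pi (cyc_classes q n) (\<lambda>C. subfield_GF q (card C))" for b
      using extend_from_leaders_in_Fn extend_from_leaders_lead assms(6) that by blast
  qed (use finite_cyc_classes GF_nonempty in auto)
  also have "\<dots> = (\<Sum>C\<in>cyc_classes q n. card C - Max (?agree C ` subfield_GF q (card C)))"
    using GF_nonempty by (intro sum.cong refl Min_diff_eq_diff_Max) auto
  finally show ?thesis .
qed

end
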